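(* Let $G$ and $H$ be nontrivial finite groups and let $p$ be a prime. Then $G\times H$ contains an element of order $p$ whose centralizer in $G\times H$ is a $p$-group if and only if both $G$ contains an element of order $p$ whose centralizer in $G$ is a $p$-group and $H$ contains an element of order $p$ whose centralizer in $H$ is a $p$-group. *)

theory Defs
  imports "HOL-Algebra.Algebra"
begin

definition elem_centralizer :: "('a, 'b) monoid_scheme \<Rightarrow> 'a \<Rightarrow> 'a set" where
  "elem_centralizer G g = {x \<in> carrier G. x \<otimes>\<^bsub>G\<^esub> g = g \<otimes>\<^bsub>G\<^esub> x}"

definition is_p_group_set :: "nat \<Rightarrow> 'a set \<Rightarrow> bool" where
  "is_p_group_set p S \<longleftrightarrow> finite S \<and> (\<exists>k::nat. card S = p ^ k)"

definition has_p_elem_pcentralizer :: "('a, 'b) monoid_scheme \<Rightarrow> nat \<Rightarrow> bool" where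
  "has_p_elem_pcentralizer G p \<longleftrightarrow>
     (\<exists>g \<in> carrier G. group.ord G g = p \<and> is_p_group_set p (elem_centralizer G g))"

end

theory Submission
  imports Defs
begin

text \<open>Orders and centralizers in \<open>G \<times> H\<close> are computed componentwise:
  \<open>ord (g, h) = lcm (ord g) (ord h)\<close> and \<open>C(g, h) = C(g) \<times> C(h)\<close>, and a product of two
  nonempty sets has prime power size iff both factors do. So the only issue is a component of
  order 1 rather than \<open>p\<close>, i.e. \<open>g = 1\<close>. Then \<open>C(g)\<close> is all of \<open>G\<close>, so \<open>G\<close> is a nontrivial
  \<open>p\<close>-group; it contains an element of order \<open>p\<close>, and every centralizer in it is a \<open>p\<close>-group.\<close>

lemma DirProd_pow:
  "(g, h) [^]\<^bsub>G \<times>\<times> H\<^esub> (n::nat) = (g [^]\<^bsub>G\<^esub> n, h [^]\<^bsub>H\<^esub> n)"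
  by (induction n) auto

lemma ord_DirProd:
  assumes "group G" "group H" "g \<in> carrier G" "h \<in> carrier H"
  shows "group.ord (G \<times>\<times> H) (g, h) = lcm (group.ord G g) (group.ord H h)"
proof -
  have "group (G \<times>\<times> H)" using assms by (simp add: DirProd_group)
  then show ?thesis
    using assms by (simp add: group.ord_unique DirProd_pow group.pow_eq_id)
qed

lemma elem_centralizer_DirProd:
  "elem_centralizer (G \<times>\<times> H) (g, h) = elem_centralizer G g \<times> elem_centralizer H h"
  unfolding elem_centralizer_def by auto

lemma (in group) elem_centralizer_one: "elem_centralizer G \<one> = carrier G"
  unfolding elem_centralizer_def by auto

lemma (in group) one_in_elem_centralizer:
  "g \<in> carrier G \<Longrightarrow> \<one> \<in> elem_centralizer G g"
  unfolding elem_centralizer_def by auto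

lemma (in group) subgroup_elem_centralizer:
  assumes g: "g \<in> carrier G"
  shows "subgroup (elem_centralizer G g) G"
proof
  show "elem_centralizer G g \<subseteq> carrier G"
    unfolding elem_centralizer_def by auto
  show "\<one> \<in> elem_centralizer G g"
    using g by (rule one_in_elem_centralizer)
next
  fix x y assume "x \<in> elem_centralizer G g" "y \<in> elem_centralizer G g"
  then have x: "x \<in> carrier G" "x \<otimes> g = g \<otimes> x" and y: "y \<in> carrier G" "y \<otimes> g = g \<otimes> y"
    unfolding elem_centralizer_def by auto
  have "x \<otimes> y \<otimes> g = x \<otimes> (g \<otimes> y)"
    using x y g by (simp add: m_assoc)
  also have "\<dots> = g \<otimes> (x \<otimes> y)"
    using x y g by (simp flip: m_assoc)
  finally show "x \<otimes> y \<in> elem_centralizer G g"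
    using x y unfolding elem_centralizer_def by auto
next
  fix x assume "x \<in> elem_centralizer G g"
  then have x: "x \<in> carrier G" and comm: "x \<otimes> g = g \<otimes> x"
    unfolding elem_centralizer_def by auto
  have "inv x \<otimes> g = inv x \<otimes> (g \<otimes> x) \<otimes> inv x"
    using x g by (simp add: m_assoc)
  also have "\<dots> = inv x \<otimes> (x \<otimes> g) \<otimes> inv x"
    by (simp only: comm)
  also have "\<dots> = g \<otimes> inv x"
    using x g by (simp flip: m_assoc)
  finally show "inv x \<in> elem_centralizer G g"
    using x unfolding elem_centralizer_def by auto
qed

lemma is_p_group_set_dvd:
  assumes "Factorial_Ring.prime p" "is_p_group_set p S" "finite T" "card T dvd card S"
  shows "is_p_group_set p T"
proof -
  obtain k where "card S = p ^ k"
    using assms(2) unfolding is_p_group_set_def by blast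
  then obtain i where "card T = p ^ i"
    using assms(4) divides_primepow_nat[OF assms(1)] by auto
  then show ?thesis
    using assms(3) unfolding is_p_group_set_def by blast
qed

lemma is_p_group_set_Times_iff:
  assumes p: "Factorial_Ring.prime p" and "A \<noteq> {}" "B \<noteq> {}"
  shows "is_p_group_set p (A \<times> B) \<longleftrightarrow> is_p_group_set p A \<and> is_p_group_set p B"
proof
  assume AB: "is_p_group_set p (A \<times> B)"
  then have fin: "finite (A \<times> B)"
    unfolding is_p_group_set_def by blast
  have "finite A"
    using fin assms(3) by (rule finite_cartesian_productD1)
  moreover have "finite B"
    using fin assms(2) by (rule finite_cartesian_productD2)
  ultimately show "is_p_group_set p A \<and> is_p_group_set p B"
    using is_p_group_set_dvd[OF p AB, of A] is_p_group_set_dvd[OF p AB, of B]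
    by (simp add: card_cartesian_product)
next
  assume "is_p_group_set p A \<and> is_p_group_set p B"
  then obtain i j where "finite A" "finite B" "card A = p ^ i" "card B = p ^ j"
    unfolding is_p_group_set_def by blast
  then have "finite (A \<times> B)" "card (A \<times> B) = p ^ (i + j)"
    by (simp_all add: card_cartesian_product power_add)
  then show "is_p_group_set p (A \<times> B)"
    unfolding is_p_group_set_def by blast
qed

lemma is_p_group_set_elem_centralizer_DirProd_iff:
  assumes "group G" "group H" "g \<in> carrier G" "h \<in> carrier H" "Factorial_Ring.prime p"
  shows "is_p_group_set p (elem_centralizer (G \<times>\<times> H) (g, h)) \<longleftrightarrow>
           is_p_group_set p (elem_centralizer G g) \<and> is_p_group_set p (elem_centralizer H h)"
  unfolding elem_centralizer_DirProd
proof (rule is_p_group_set_Times_iff[OF assms(5)])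
  show "elem_centralizer G g \<noteq> {}"
    using group.one_in_elem_centralizer[OF assms(1,3)] by blast
  show "elem_centralizer H h \<noteq> {}"
    using group.one_in_elem_centralizer[OF assms(2,4)] by blast
qed

lemma (in group) subgroup_is_p_group_set:
  assumes "finite (carrier G)" "Factorial_Ring.prime p" "is_p_group_set p (carrier G)"
    and "subgroup S G"
  shows "is_p_group_set p S"
proof (rule is_p_group_set_dvd[OF assms(2,3)])
  show "finite S"
    using subgroup.subset[OF assms(4)] assms(1) by (rule finite_subset)
  have "card S dvd order G"
    unfolding lagrange[OF assms(4), symmetric] by simp
  then show "card S dvd card (carrier G)"
    by (simp add: order_def)
qed

lemma (in group) p_group_has_elem_of_ord_prime:
  assumes "finite (carrier G)" "Factorial_Ring.prime p" "is_p_group_set p (carrier G)"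
    and "carrier G \<noteq> {\<one>}"
  obtains y where "y \<in> carrier G" "ord y = p"
proof -
  obtain x where x: "x \<in> carrier G" "x \<noteq> \<one>"
    using assms(4) one_closed by blast
  obtain k where "card (carrier G) = p ^ k"
    using assms(3) unfolding is_p_group_set_def by blast
  then have "ord x dvd p ^ k"
    using ord_dvd_group_order[OF x(1)] by (simp add: order_def)
  then obtain i where i: "ord x = p ^ i"
    by (auto simp: divides_primepow_nat[OF assms(2)])
  have "i \<noteq> 0"
    using i x(2) ord_eq_1[OF x(1)] by (metis power_0)
  then obtain j where j: "i = Suc j"
    by (cases i) auto
  have "p > 0"
    using assms(2) prime_gt_0_nat by blast
  then have "ord (x [^] p ^ j) = p"
    using ord_pow[OF x(1), of "p ^ j"] i j by simp
  with nat_pow_closed[OF x(1)] show thesis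
    by (rule that)
qed

lemma (in group) has_p_elem_pcentralizer_iff_ord_dvd:
  assumes fin: "finite (carrier G)" and nontriv: "carrier G \<noteq> {\<one>}"
    and p: "Factorial_Ring.prime p"
  shows "has_p_elem_pcentralizer G p \<longleftrightarrow>
           (\<exists>g \<in> carrier G. ord g dvd p \<and> is_p_group_set p (elem_centralizer G g))"
proof
  assume "\<exists>g \<in> carrier G. ord g dvd p \<and> is_p_group_set p (elem_centralizer G g)"
  then obtain g where g: "g \<in> carrier G" "ord g dvd p"
    and C: "is_p_group_set p (elem_centralizer G g)"
    by blast
  have "ord g = p \<or> ord g = 1"
    using p g(2) unfolding prime_nat_iff by blast
  then consider "ord g = p" | "g = \<one>"
    using ord_eq_1[OF g(1)] by blast
  then show "has_p_elem_pcentralizer G p"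
  proof cases
    case 1
    with g C show ?thesis
      unfolding has_p_elem_pcentralizer_def by blast
  next
    case 2
    with C have pG: "is_p_group_set p (carrier G)"
      by (simp add: elem_centralizer_one)
    obtain y where "y \<in> carrier G" "ord y = p"
      using p_group_has_elem_of_ord_prime[OF fin p pG nontriv] .
    then show ?thesis
      unfolding has_p_elem_pcentralizer_def
      using subgroup_is_p_group_set[OF fin p pG subgroup_elem_centralizer] by blast
  qed
next
  assume "has_p_elem_pcentralizer G p"
  then obtain g where "g \<in> carrier G" "ord g = p" "is_p_group_set p (elem_centralizer G g)"
    unfolding has_p_elem_pcentralizer_def by blast
  then show "\<exists>g \<in> carrier G. ord g dvd p \<and> is_p_group_set p (elem_centralizer G g)"
    by (intro bexI[of _ g]) simp_all
qed

theorem lemma4p5: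
  fixes G :: "('a, 'c) monoid_scheme" and H :: "('b, 'd) monoid_scheme" and p :: nat
  assumes "group G" and "group H"
    and "finite (carrier G)" and "finite (carrier H)"
    and "carrier G \<noteq> {\<one>\<^bsub>G\<^esub>}" and "carrier H \<noteq> {\<one>\<^bsub>H\<^esub>}"
    and "Factorial_Ring.prime p"
  shows "has_p_elem_pcentralizer (G \<times>\<times> H) p \<longleftrightarrow>
           has_p_elem_pcentralizer G p \<and> has_p_elem_pcentralizer H p"
proof -
  interpret G: group G by fact
  interpret H: group H by fact
  interpret GH: group "G \<times>\<times> H" using assms(1,2) by (rule DirProd_group)
  have GH_fin: "finite (carrier (G \<times>\<times> H))"
    and GH_nontriv: "carrier (G \<times>\<times> H) \<noteq> {\<one>\<^bsub>G \<times>\<times> H\<^esub>}"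
    using assms(3-6) by auto
  have "has_p_elem_pcentralizer (G \<times>\<times> H) p \<longleftrightarrow>
      (\<exists>g \<in> carrier G. \<exists>h \<in> carrier H. GH.ord (g, h) dvd p \<and>
         is_p_group_set p (elem_centralizer (G \<times>\<times> H) (g, h)))"
    using GH.has_p_elem_pcentralizer_iff_ord_dvd[OF GH_fin GH_nontriv assms(7)] by simp
  also have "\<dots> \<longleftrightarrow>
      (\<exists>g \<in> carrier G. G.ord g dvd p \<and> is_p_group_set p (elem_centralizer G g)) \<and>
      (\<exists>h \<in> carrier H. H.ord h dvd p \<and> is_p_group_set p (elem_centralizer H h))"
    by (simp add: ord_DirProd[OF assms(1,2)]
        is_p_group_set_elem_centralizer_DirProd_iff[OF assms(1,2) _ _ assms(7)]) blast
  also have "\<dots> \<longleftrightarrow> has_p_elem_pcentralizer G p \<and> has_p_elem_pcentralizer H p"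
    using G.has_p_elem_pcentralizer_iff_ord_dvd H.has_p_elem_pcentralizer_iff_ord_dvd assms(3-7)
    by simp
  finally show ?thesis .
qed

end
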